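(* In the Riemann problem setting of the context, assume the initial data generate a left rarefaction and a right rarefaction, i.e. $p_*\le p_L$ and $p_*\le p_R$. Then for all $K,M\in\{L,R\}$: $$|u_*-u_K|\le[\![u]\!],\qquad 0\le p_K-p_*\le\rho_Ka_K[\![u]\!],\qquad|\rho_{*K}-\rho_M|\le\rho_Ka_K^{-1}[\![u]\!]+|[\![\rho]\!]|.$$
   Context: Let $\gamma\in(1,2]$. Consider the one-dimensional Riemann problem for the complete Euler equations with left and right primitive states $V_K=(\rho_K,u_K,p_K)$, $\rho_K,p_K>0$, $K=L,R$ (transverse velocity components play no role), sound speeds $a_K=\sqrt{\gamma p_K/\rho_K}$, and jumps $[\![\rho]\!]=\rho_R-\rho_L$, $[\![u]\!]=u_R-u_L$, $[\![p]\!]=p_R-p_L$. For $K=L,R$ define $f_K(p)=(p-p_K)\big(\frac{A_K}{p+B_K}\big)^{1/2}$ if $p>p_K$ and $f_K(p)=\frac{2a_K}{\gamma-1}\big[(p/p_K)^{\frac{\gamma-1}{2\gamma}}-1\big]$ if $p\le p_K$, with $A_K=\frac2{(\gamma+1)\rho_K}$, $B_K=\frac{\gamma-1}{\gamma+1}p_K$. The star pressure $p_*$ solves $f_L(p_* )+f_R(p_* )+u_R-u_L=0$ and the star velocity is $u_*=u_L-f_L(p_* )=u_R+f_R(p_* )$. The $K$-wave is a rarefaction if $p_*\le p_K$ and a shock if $p_*>p_K$. The density on the $K$-side of the contact discontinuity is $\rho_{*K}=\rho_K(p_*/p_K)^{1/\gamma}$ if the $K$-wave is a rarefaction, and $\rho_{*K}=\rho_K\frac{p_*/p_K+\frac{\gamma-1}{\gamma+1}}{\frac{\gamma-1}{\gamma+1}p_*/p_K+1}$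 if it is a shock. *)

theory Defs
  imports Complex_Main
begin

datatype side = L | R

definition sound_speed :: "real \<Rightarrow> real \<Rightarrow> real \<Rightarrow> real" where
  "sound_speed \<gamma> \<rho>K pK = sqrt (\<gamma> * pK / \<rho>K)"

text \<open>Toro's pressure function f_K for a wave on side K with state (rho_K, p_K).\<close>
definition fK :: "real \<Rightarrow> real \<Rightarrow> real \<Rightarrow> real \<Rightarrow> real" where
  "fK \<gamma> \<rho>K pK p =
     (if p > pK then
        (p - pK) * sqrt ((2 / ((\<gamma> + 1) * \<rho>K)) / (p + (\<gamma> - 1) / (\<gamma> + 1) * pK))
      else
        2 * sound_speed \<gamma> \<rho>K pK / (\<gamma> - 1) * ((p / pK) powr ((\<gamma> - 1) / (2 * \<gamma>)) - 1))"

definition rho_star :: "real \<Rightarrow> real \<Rightarrow> real \<Rightarrow> real \<Rightarrow> real" where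
  "rho_star \<gamma> \<rho>K pK ps =
     (if ps \<le> pK then \<rho>K * (ps / pK) powr (1 / \<gamma>)
      else \<rho>K * (ps / pK + (\<gamma> - 1) / (\<gamma> + 1)) / ((\<gamma> - 1) / (\<gamma> + 1) * (ps / pK) + 1))"

end

theory Submission
  imports Defs "HOL-Analysis.Convex"
begin

text \<open>In the two-rarefaction case both wave functions are nonpositive and add up to
  \<open>-(u R - u L)\<close>, so each \<open>-f\<^sub>K(p\<^sub>*)\<close> lies between \<open>0\<close> and the velocity jump.
  It then suffices to bound the pressure and density drops across one rarefaction by
  \<open>\<rho>\<^sub>K a\<^sub>K (-f\<^sub>K(p\<^sub>*))\<close> and \<open>\<rho>\<^sub>K a\<^sub>K\<^sup>-\<^sup>1 (-f\<^sub>K(p\<^sub>*))\<close>. Both bounds follow from the concavity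
  estimate \<open>x\<^sup>e \<le> e x + 1 - e\<close> for \<open>0 \<le> e \<le> 1\<close>, applied with \<open>x = p\<^sub>*/p\<^sub>K\<close>, \<open>e = (\<gamma>-1)/(2\<gamma>)\<close>
  for the pressure and with \<open>x = (p\<^sub>*/p\<^sub>K)\<^sup>1\<^sup>/\<^sup>\<gamma>\<close>, \<open>e = (\<gamma>-1)/2\<close> for the density; the latter
  exponent is at most \<open>1\<close> exactly because \<open>\<gamma> \<le> 2\<close>.\<close>

lemma powr_le_affine:
  fixes x e :: real
  assumes "0 < x" and "0 \<le> e" and "e \<le> 1"
  shows "x powr e \<le> e * x + (1 - e)"
  using Youngs_inequality_0[of e "1 - e" x 1] assms by simp

lemma sound_speed_pos:
  assumes "0 < \<gamma>" and "0 < \<rho>K" and "0 < pK"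
  shows "0 < sound_speed \<gamma> \<rho>K pK"
  using assms by (simp add: sound_speed_def)

lemma sound_speed_square:
  assumes "0 < \<gamma>" and "0 < \<rho>K" and "0 < pK"
  shows "\<rho>K * (sound_speed \<gamma> \<rho>K pK)\<^sup>2 = \<gamma> * pK"
  using assms by (simp add: sound_speed_def)

lemma fK_rarefaction:
  assumes "p \<le> pK"
  shows "fK \<gamma> \<rho>K pK p =
    2 * sound_speed \<gamma> \<rho>K pK / (\<gamma> - 1) * ((p / pK) powr ((\<gamma> - 1) / (2 * \<gamma>)) - 1)"
  using assms by (simp add: fK_def)

lemma rho_star_rarefaction:
  assumes "ps \<le> pK"
  shows "rho_star \<gamma> \<rho>K pK ps = \<rho>K * (ps / pK) powr (1 / \<gamma>)"
  using assms by (simp add: rho_star_def)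

lemma fK_rarefaction_nonpos:
  assumes "1 < \<gamma>" and "0 < \<rho>K" and "0 < p" and "p \<le> pK"
  shows "fK \<gamma> \<rho>K pK p \<le> 0"
proof -
  have "(p / pK) powr ((\<gamma> - 1) / (2 * \<gamma>)) \<le> 1"
    using assms by (intro powr_le1) auto
  moreover have "0 < sound_speed \<gamma> \<rho>K pK"
    using assms by (intro sound_speed_pos) auto
  ultimately show ?thesis
    using assms by (simp add: fK_rarefaction divide_nonpos_pos mult_nonneg_nonpos)
qed

lemma rho_star_rarefaction_bounds:
  assumes "0 < \<gamma>" and "0 < \<rho>K" and "0 \<le> ps" and "ps \<le> pK"
  shows "0 \<le> rho_star \<gamma> \<rho>K pK ps" and "rho_star \<gamma> \<rho>K pK ps \<le> \<rho>K"
proof -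
  have "(ps / pK) powr (1 / \<gamma>) \<le> 1"
    using assms by (intro powr_le1) (auto simp: divide_le_eq_1)
  then show "0 \<le> rho_star \<gamma> \<rho>K pK ps" and "rho_star \<gamma> \<rho>K pK ps \<le> \<rho>K"
    using assms by (simp_all add: rho_star_rarefaction)
qed

lemma rarefaction_pressure_drop_le:
  assumes "1 < \<gamma>" and "0 < \<rho>K" and "0 < ps" and "ps \<le> pK"
  shows "pK - ps \<le> \<rho>K * sound_speed \<gamma> \<rho>K pK * - fK \<gamma> \<rho>K pK ps"
proof -
  define e where "e = (\<gamma> - 1) / (2 * \<gamma>)"
  define y where "y = (ps / pK) powr e"
  have e: "0 < e" "e \<le> 1"
    using assms(1) by (auto simp: e_def field_simps)
  have concavity: "y \<le> e * (ps / pK) + (1 - e)"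
    unfolding y_def using assms e by (intro powr_le_affine) auto
  have "pK - ps = pK * (1 - ps / pK)"
    using assms by (simp add: right_diff_distrib)
  also have "\<dots> \<le> pK * ((1 - y) / e)"
    using assms e concavity by (intro mult_left_mono) (auto simp: field_simps)
  also have "\<dots> = 2 * (\<gamma> * pK) / (\<gamma> - 1) * (1 - y)"
    using assms(1) by (simp add: e_def field_simps)
  also have "\<dots> = 2 * (\<rho>K * (sound_speed \<gamma> \<rho>K pK)\<^sup>2) / (\<gamma> - 1) * (1 - y)"
    using assms by (simp add: sound_speed_square)
  also have "\<dots> = \<rho>K * sound_speed \<gamma> \<rho>K pK * - fK \<gamma> \<rho>K pK ps"
    using assms(1,4) by (simp add: fK_rarefaction y_def e_def power2_eq_square field_simps)
  finally show ?thesis .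
qed

lemma rarefaction_density_drop_le:
  assumes "1 < \<gamma>" and "\<gamma> \<le> 2" and "0 < \<rho>K" and "0 < ps" and "ps \<le> pK"
  shows "\<rho>K - rho_star \<gamma> \<rho>K pK ps \<le> \<rho>K / sound_speed \<gamma> \<rho>K pK * - fK \<gamma> \<rho>K pK ps"
proof -
  define e where "e = (\<gamma> - 1) / 2"
  define y where "y = (ps / pK) powr ((\<gamma> - 1) / (2 * \<gamma>))"
  define z where "z = (ps / pK) powr (1 / \<gamma>)"
  have e: "0 < e" "e \<le> 1"
    using assms(1,2) by (auto simp: e_def)
  have "y = z powr e"
    using assms by (simp add: y_def z_def e_def powr_powr mult.commute)
  also have "\<dots> \<le> e * z + (1 - e)"
    using assms e by (simp add: z_def powr_le_affine)
  finally have concavity: "y \<le> e * z + (1 - e)" .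
  have "\<rho>K - rho_star \<gamma> \<rho>K pK ps = \<rho>K * (1 - z)"
    using assms by (simp add: rho_star_rarefaction z_def right_diff_distrib)
  also have "\<dots> \<le> \<rho>K * (2 * (1 - y) / (\<gamma> - 1))"
    using assms(1,3) concavity by (intro mult_left_mono) (auto simp: e_def field_simps)
  also have "\<dots> = \<rho>K / sound_speed \<gamma> \<rho>K pK * - fK \<gamma> \<rho>K pK ps"
    using assms sound_speed_pos[of \<gamma> \<rho>K pK]
    by (simp add: fK_rarefaction y_def field_simps)
  finally show ?thesis .
qed

theorem lemma3p4:
  fixes \<gamma> :: real and \<rho> u p :: "side \<Rightarrow> real" and ps :: real
  assumes "1 < \<gamma>" and "\<gamma> \<le> 2"
    and "\<And>K. \<rho> K > 0" and "\<And>K. p K > 0"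
    and "ps > 0"
    and "fK \<gamma> (\<rho> L) (p L) ps + fK \<gamma> (\<rho> R) (p R) ps + u R - u L = 0"
    and "ps \<le> p L" and "ps \<le> p R"
  shows "\<forall>K M. \<bar>(u L - fK \<gamma> (\<rho> L) (p L) ps) - u K\<bar> \<le> u R - u L
            \<and> 0 \<le> p K - ps
            \<and> p K - ps \<le> \<rho> K * sound_speed \<gamma> (\<rho> K) (p K) * (u R - u L)
            \<and> \<bar>rho_star \<gamma> (\<rho> K) (p K) ps - \<rho> M\<bar>
                \<le> \<rho> K / sound_speed \<gamma> (\<rho> K) (p K) * (u R - u L) + \<bar>\<rho> R - \<rho> L\<bar>"
proof (intro allI conjI)
  fix K M
  let ?a = "sound_speed \<gamma> (\<rho> K) (p K)" and ?f = "\<lambda>K. fK \<gamma> (\<rho> K) (p K) ps"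
  have rarefaction: "ps \<le> p K" for K
    using assms(7,8) by (cases K) auto
  have f_nonpos: "?f K \<le> 0" for K
    using assms(1,3,5) rarefaction by (intro fK_rarefaction_nonpos) auto
  have f_bound: "- ?f K \<le> u R - u L"
    using assms(6) f_nonpos[of L] f_nonpos[of R] by (cases K) auto
  have a: "0 < ?a"
    using assms(1,3,4) by (intro sound_speed_pos) auto
  show "\<bar>(u L - ?f L) - u K\<bar> \<le> u R - u L"
    using assms(6) f_nonpos[of L] f_nonpos[of R] by (cases K) auto
  show "0 \<le> p K - ps"
    using rarefaction by simp
  have "p K - ps \<le> \<rho> K * ?a * - ?f K"
    using assms rarefaction by (intro rarefaction_pressure_drop_le) auto
  also have "\<dots> \<le> \<rho> K * ?a * (u R - u L)"
    using f_bound a assms(3)[of K] by (intro mult_left_mono) auto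
  finally show "p K - ps \<le> \<rho> K * ?a * (u R - u L)" .
  have "\<rho> K - rho_star \<gamma> (\<rho> K) (p K) ps \<le> \<rho> K / ?a * - ?f K"
    using assms rarefaction by (intro rarefaction_density_drop_le) auto
  also have "\<dots> \<le> \<rho> K / ?a * (u R - u L)"
    using f_bound a assms(3)[of K] by (intro mult_left_mono) auto
  finally have "\<rho> K - rho_star \<gamma> (\<rho> K) (p K) ps \<le> \<rho> K / ?a * (u R - u L)" .
  moreover have "0 \<le> rho_star \<gamma> (\<rho> K) (p K) ps" "rho_star \<gamma> (\<rho> K) (p K) ps \<le> \<rho> K"
    using rho_star_rarefaction_bounds[of \<gamma> "\<rho> K" ps "p K"] assms(1,3,5) rarefaction by auto
  moreover have "\<bar>\<rho> K - \<rho> M\<bar> \<le> \<bar>\<rho> R - \<rho> L\<bar>"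
    by (cases K; cases M) auto
  ultimately show "\<bar>rho_star \<gamma> (\<rho> K) (p K) ps - \<rho> M\<bar> \<le> \<rho> K / ?a * (u R - u L) + \<bar>\<rho> R - \<rho> L\<bar>"
    by linarith
qed

end
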